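(* Let $A\in\mathbb{R}^{n\times n}$ be such that $\Lambda_1$ is complex and use the Euclidean norm. For $y_0\in\mathbb{R}^n$ and unit $\hat z_0\in\mathbb{R}^n$ with $w^{(1)}y_0\ne0$ and $w^{(1)}\hat z_0\neq0$, $$\sqrt{\frac{1-V_1}{1+V_1}}\le \mathrm{OT}(t,y_0,\hat z_0)\le\sqrt{\frac{1+V_1}{1-V_1}}\qquad\text{for all }t\in\mathbb{R}.$$ Moreover, if $\gamma_1(\hat z_0)-\gamma_1(\hat y_0)$ is an odd multiple of $\pi/2$, then $$\min_{t\in\mathbb{R}}\mathrm{OT}(t,y_0,\hat z_0)=\sqrt{\frac{1-V_1}{1+V_1}},\qquad \max_{t\in\mathbb{R}}\mathrm{OT}(t,y_0,\hat z_0)=\sqrt{\frac{1+V_1}{1-V_1}}.$$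
   Context: $\Lambda_1$ complex: the eigenvalues of $A$ with maximal real part are exactly a pair of simple complex conjugate eigenvalues $\lambda_1,\overline{\lambda_1}$, $\omega_1=\operatorname{Im}\lambda_1>0$. $w^{(1)}$ (row) and $v^{(1)}$ (column) are left and right eigenvectors for $\lambda_1$, $\hat w^{(1)}=w^{(1)}/\|w^{(1)}\|_2$, $\hat v^{(1)}=v^{(1)}/\|v^{(1)}\|_2$. $V_1=|(\hat v^{(1)})^T\hat v^{(1)}|\in[0,1)$ ($^T$ = transpose without conjugation). $\hat y_0=y_0/\|y_0\|_2$. Polar forms: $\hat v^{(1)}_k=|\hat v^{(1)}_k|e^{\sqrt{-1}\alpha_{1k}}$, and for real $u$ with $w^{(1)}u\ne0$, $\hat w^{(1)}u=|\hat w^{(1)}u|e^{\sqrt{-1}\gamma_1(u)}$. $\hat\Theta_1(t,u)=\big(|\hat v^{(1)}_k|\cos(\omega_1t+\alpha_{1k}+\gamma_1(u))\big)_{k=1}^n$, and $\mathrm{OT}(t,y_0,\hat z_0)=\|\hat\Theta_1(t,\hat z_0)\|_2/\|\hat\Theta_1(t,\hat y_0)\|_2$. *)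

theory Defs
  imports "HOL-Analysis.Analysis" "Jordan_Normal_Form.Char_Poly"
begin

definition cvnorm :: "complex vec \<Rightarrow> real" where
  "cvnorm v = sqrt (\<Sum>k<dim_vec v. (cmod (v $ k))^2)"

definition rvnorm :: "real vec \<Rightarrow> real" where
  "rvnorm y = sqrt (\<Sum>k<dim_vec y. (y $ k)^2)"

definition cnormalize :: "complex vec \<Rightarrow> complex vec" where
  "cnormalize v = complex_of_real (1 / cvnorm v) \<cdot>\<^sub>v v"

definition rnormalize :: "real vec \<Rightarrow> real vec" where
  "rnormalize y = (1 / rvnorm y) \<cdot>\<^sub>v y"

definition cvec :: "real vec \<Rightarrow> complex vec" where
  "cvec u = map_vec complex_of_real u"

text \<open>V_1 = |(hat v)^T hat v| (transpose without conjugation).\<close>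
definition V1 :: "complex vec \<Rightarrow> real" where
  "V1 v = cmod (cnormalize v \<bullet> cnormalize v)"

text \<open>gamma_1(u): argument of hat-w u (row vector times column vector, no conjugation).\<close>
definition gamma1 :: "complex vec \<Rightarrow> real vec \<Rightarrow> real" where
  "gamma1 w u = Arg (cnormalize w \<bullet> cvec u)"

definition Theta1 :: "real \<Rightarrow> complex vec \<Rightarrow> complex vec \<Rightarrow> real \<Rightarrow> real vec \<Rightarrow> real vec" where
  "Theta1 \<omega> v w t u = vec (dim_vec v)
     (\<lambda>k. cmod (cnormalize v $ k) * cos (\<omega> * t + Arg (cnormalize v $ k) + gamma1 w u))"

definition OT :: "real \<Rightarrow> complex vec \<Rightarrow> complex vec \<Rightarrow> real \<Rightarrow> real vec \<Rightarrow> real vec \<Rightarrow> real" where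
  "OT \<omega> v w t y0 z0 = rvnorm (Theta1 \<omega> v w t z0) / rvnorm (Theta1 \<omega> v w t (rnormalize y0))"

end

theory Submission
  imports Defs
begin

unbundle no vec_syntax and no inner_syntax

text \<open>
  With \<open>c = v\<^sub>1 / \<parallel>v\<^sub>1\<parallel>\<close>, the identity \<open>|z|\<^sup>2 cos\<^sup>2 (\<phi> + arg z) = (|z|\<^sup>2 + Re (cis (2\<phi>) z\<^sup>2)) / 2\<close>
  summed over the components gives \<open>\<parallel>\<Theta>\<^sub>1(t,u)\<parallel>\<^sup>2 = (1 + V\<^sub>1 cos (2(\<omega>\<^sub>1 t + \<gamma>\<^sub>1(u)) + \<beta>)) / 2\<close>
  with \<open>\<beta> = arg (c\<^sup>T c)\<close>. Hence \<open>OT\<^sup>2 = (1 + V\<^sub>1 cos \<theta>\<^sub>z) / (1 + V\<^sub>1 cos \<theta>\<^sub>y)\<close>, which lies between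
  \<open>(1 - V\<^sub>1)/(1 + V\<^sub>1)\<close> and its reciprocal as soon as \<open>V\<^sub>1 < 1\<close>. If the phases differ by an odd
  multiple of \<open>\<pi>/2\<close>, then \<open>cos \<theta>\<^sub>z = - cos \<theta>\<^sub>y\<close> and both bounds are attained at \<open>\<theta>\<^sub>y = 0, \<pi>\<close>.
  Finally \<open>V\<^sub>1 < 1\<close> because equality in \<open>|c\<^sup>T c| \<le> \<parallel>c\<parallel>\<^sup>2\<close> makes a unimodular multiple of \<open>c\<close>
  real, and a real eigenvector of a real matrix has a real eigenvalue.
\<close>

lemma cis_mult_rcis: "cis a * rcis r b = rcis r (a + b)"
  using rcis_mult[of 1 a r b] by (simp add: rcis_def)

lemma Re_cis_mult: "Re (cis a * z) = cmod z * cos (a + Arg z)"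
  using cis_mult_rcis[of a "cmod z" "Arg z"] by (simp add: rcis_cmod_Arg)

lemma cmod_cos_add_Arg_squared:
  "(cmod z * cos (x + Arg z))\<^sup>2 = ((cmod z)\<^sup>2 + Re (cis (2 * x) * z\<^sup>2)) / 2"
proof -
  have "z\<^sup>2 = rcis ((cmod z)\<^sup>2) (2 * Arg z)"
    using DeMoivre2[of "cmod z" "Arg z" 2] by (simp add: rcis_cmod_Arg)
  then have "Re (cis (2 * x) * z\<^sup>2) = (cmod z)\<^sup>2 * cos (2 * (x + Arg z))"
    by (simp add: cis_mult_rcis distrib_left)
  also have "\<dots> = (cmod z)\<^sup>2 * (2 * (cos (x + Arg z))\<^sup>2 - 1)"
    by (simp only: cos_double_cos)
  finally show ?thesis
    by (simp add: algebra_simps)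
qed

lemma cos_add_odd_multiple_pi: "cos (x + (2 * of_int k + 1) * pi) = - cos x"
proof -
  have "x + (2 * of_int k + 1) * pi = (x + pi) + of_int k * (2 * pi)"
    by (simp add: algebra_simps)
  then show ?thesis
    using cos.plus_of_int[of "x + pi" k] by (simp only:) simp
qed

lemma cvnorm_squared: "(cvnorm c)\<^sup>2 = (\<Sum>k<dim_vec c. (cmod (c $ k))\<^sup>2)"
  by (simp add: cvnorm_def sum_nonneg)

lemma rvnorm_squared: "(rvnorm y)\<^sup>2 = (\<Sum>k<dim_vec y. (y $ k)\<^sup>2)"
  by (simp add: rvnorm_def sum_nonneg)

lemma scalar_prod_self: "c \<bullet> c = (\<Sum>k<dim_vec c. c $ k * c $ k)"
  by (simp add: scalar_prod_def atLeast0LessThan)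

lemma cvnorm_smult: "cvnorm (a \<cdot>\<^sub>v c) = cmod a * cvnorm c"
  by (simp add: cvnorm_def norm_mult power_mult_distrib sum_distrib_left[symmetric] real_sqrt_mult)

lemma cvnorm_pos:
  assumes "c \<noteq> 0\<^sub>v (dim_vec c)"
  shows "cvnorm c > 0"
proof -
  obtain k where k: "k < dim_vec c" "c $ k \<noteq> 0"
    using assms by (auto simp: vec_eq_iff)
  then have "0 < (cmod (c $ k))\<^sup>2" by simp
  also have "\<dots> \<le> (\<Sum>k<dim_vec c. (cmod (c $ k))\<^sup>2)"
    using k by (intro member_le_sum) auto
  finally show ?thesis by (simp add: cvnorm_def)
qed

lemma cvnorm_cnormalize:
  assumes "c \<noteq> 0\<^sub>v (dim_vec c)"
  shows "cvnorm (cnormalize c) = 1"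
  using cvnorm_pos[OF assms] by (simp add: cnormalize_def cvnorm_smult norm_divide)

lemma eigenvector_smult:
  fixes A :: "'a :: field mat"
  assumes "A \<in> carrier_mat n n" "eigenvector A v lam" "a \<noteq> 0"
  shows "eigenvector A (a \<cdot>\<^sub>v v) lam"
proof -
  have v: "v \<in> carrier_vec n" "v \<noteq> 0\<^sub>v n" "A *\<^sub>v v = lam \<cdot>\<^sub>v v"
    using assms(1,2) by (auto simp: eigenvector_def)
  have "a \<cdot>\<^sub>v v \<noteq> 0\<^sub>v n"
    using v(1,2) assms(3) by (auto simp: vec_eq_iff)
  moreover have "A *\<^sub>v (a \<cdot>\<^sub>v v) = lam \<cdot>\<^sub>v (a \<cdot>\<^sub>v v)"
    using assms(1) v by (simp add: mult_mat_vec smult_smult_assoc mult.commute)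
  ultimately show ?thesis
    using assms(1) v(1) by (auto simp: eigenvector_def)
qed

lemma cmod_scalar_prod_self_le: "cmod (c \<bullet> c) \<le> (cvnorm c)\<^sup>2"
proof -
  have "cmod (c \<bullet> c) \<le> (\<Sum>k<dim_vec c. cmod (c $ k * c $ k))"
    unfolding scalar_prod_self by (rule norm_sum)
  also have "\<dots> = (\<Sum>k<dim_vec c. (cmod (c $ k))\<^sup>2)"
    by (simp add: norm_mult power2_eq_square)
  finally show ?thesis
    by (simp add: cvnorm_squared)
qed

lemma cmod_scalar_prod_self_eq_imp_real_multiple:
  assumes "cmod (c \<bullet> c) = (cvnorm c)\<^sup>2"
  shows "\<exists>\<mu>. \<mu> \<noteq> 0 \<and> (\<forall>k < dim_vec c. Im (\<mu> * c $ k) = 0)"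
proof -
  define S where "S = c \<bullet> c"
  define \<mu> where "\<mu> = cis (- Arg S / 2)"
  \<comment> \<open>the rotation making \<open>\<Sum> (\<mu> c\<^sub>k)\<^sup>2 = |S|\<close> real, so that \<open>\<Sum> 2 (Im (\<mu> c\<^sub>k))\<^sup>2 = \<parallel>c\<parallel>\<^sup>2 - |S| = 0\<close>\<close>
  have "(\<Sum>k<dim_vec c. (\<mu> * c $ k)\<^sup>2) = (\<mu> * \<mu>) * S"
    unfolding S_def scalar_prod_self power2_eq_square sum_distrib_left by (simp add: ac_simps)
  also have "\<dots> = cis (- Arg S) * S"
    by (simp add: \<mu>_def cis_mult)
  also have "\<dots> = cis (- Arg S) * rcis (cmod S) (Arg S)"
    by (simp add: rcis_cmod_Arg)
  also have "\<dots> = cmod S"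
    by (simp add: cis_mult_rcis)
  finally have sum_squares: "(\<Sum>k<dim_vec c. (\<mu> * c $ k)\<^sup>2) = cmod S" .
  have Im_squared: "2 * (Im z)\<^sup>2 = (cmod z)\<^sup>2 - Re (z\<^sup>2)" for z
    unfolding cmod_power2 by (simp add: power2_eq_square)
  have "(\<Sum>k<dim_vec c. 2 * (Im (\<mu> * c $ k))\<^sup>2)
      = (\<Sum>k<dim_vec c. (cmod (\<mu> * c $ k))\<^sup>2 - Re ((\<mu> * c $ k)\<^sup>2))"
    by (simp only: Im_squared)
  also have "\<dots> = (\<Sum>k<dim_vec c. (cmod (c $ k))\<^sup>2) - Re (\<Sum>k<dim_vec c. (\<mu> * c $ k)\<^sup>2)"
    by (simp add: \<mu>_def norm_mult sum_subtractf)
  also have "\<dots> = 0"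
    using assms by (simp add: sum_squares S_def cvnorm_squared)
  finally have "\<forall>k < dim_vec c. Im (\<mu> * c $ k) = 0"
    by (subst (asm) sum_nonneg_eq_0_iff) auto
  moreover have "\<mu> \<noteq> 0"
    by (simp add: \<mu>_def)
  ultimately show ?thesis
    by blast
qed

lemma real_eigenvector_imp_Im_eigenvalue_eq_0:
  fixes A :: "real mat"
  assumes A: "A \<in> carrier_mat n n"
    and d: "d \<in> carrier_vec n" "d \<noteq> 0\<^sub>v n"
    and eigen: "map_mat complex_of_real A *\<^sub>v d = lam \<cdot>\<^sub>v d"
    and real: "\<And>k. k < n \<Longrightarrow> Im (d $ k) = 0"
  shows "Im lam = 0"
proof -
  obtain k where k: "k < n" "d $ k \<noteq> 0"
    using d(1,2) by (auto simp: vec_eq_iff)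
  then have "Re (d $ k) \<noteq> 0"
    using real by (simp add: complex_eq_iff)
  have "(map_mat complex_of_real A *\<^sub>v d) $ k = (\<Sum>j<n. complex_of_real (A $$ (k, j)) * d $ j)"
    using A d(1) k(1) by (simp add: scalar_prod_def atLeast0LessThan)
  then have "Im ((lam \<cdot>\<^sub>v d) $ k) = 0"
    using real by (simp add: eigen[symmetric])
  then have "Im lam * Re (d $ k) = 0"
    using d(1) real k(1) by simp
  with \<open>Re (d $ k) \<noteq> 0\<close> show ?thesis
    by simp
qed

lemma cmod_scalar_prod_self_less:
  fixes A :: "real mat"
  assumes A: "A \<in> carrier_mat n n"
    and eigen: "eigenvector (map_mat complex_of_real A) c lam" and "Im lam \<noteq> 0"
  shows "cmod (c \<bullet> c) < (cvnorm c)\<^sup>2"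
proof -
  have "cmod (c \<bullet> c) \<noteq> (cvnorm c)\<^sup>2"
  proof
    assume "cmod (c \<bullet> c) = (cvnorm c)\<^sup>2"
    then obtain \<mu> where "\<mu> \<noteq> 0" and real: "\<forall>k < dim_vec c. Im (\<mu> * c $ k) = 0"
      using cmod_scalar_prod_self_eq_imp_real_multiple by blast
    have A': "map_mat complex_of_real A \<in> carrier_mat n n"
      using A by simp
    have "eigenvector (map_mat complex_of_real A) (\<mu> \<cdot>\<^sub>v c) lam"
      using eigenvector_smult[OF A' eigen \<open>\<mu> \<noteq> 0\<close>] .
    then have d: "\<mu> \<cdot>\<^sub>v c \<in> carrier_vec n" "\<mu> \<cdot>\<^sub>v c \<noteq> 0\<^sub>v n"
        "map_mat complex_of_real A *\<^sub>v (\<mu> \<cdot>\<^sub>v c) = lam \<cdot>\<^sub>v (\<mu> \<cdot>\<^sub>v c)"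
      unfolding eigenvector_def using A' by simp_all
    moreover have "Im ((\<mu> \<cdot>\<^sub>v c) $ k) = 0" if "k < n" for k
      using d(1) real that by simp
    ultimately have "Im lam = 0"
      by (rule real_eigenvector_imp_Im_eigenvalue_eq_0[OF A])
    with \<open>Im lam \<noteq> 0\<close> show False ..
  qed
  with cmod_scalar_prod_self_le[of c] show ?thesis
    by simp
qed

lemma eigenvector_nonzero: "eigenvector A v lam \<Longrightarrow> v \<noteq> 0\<^sub>v (dim_vec v)"
  by (auto simp: eigenvector_def)

lemma V1_less_1:
  fixes A :: "real mat"
  assumes A: "A \<in> carrier_mat n n"
    and eigen: "eigenvector (map_mat complex_of_real A) v lam" and "Im lam \<noteq> 0"
  shows "V1 v < 1"
proof -
  have "v \<noteq> 0\<^sub>v (dim_vec v)"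
    using eigen by (rule eigenvector_nonzero)
  have "eigenvector (map_mat complex_of_real A) (cnormalize v) lam"
    unfolding cnormalize_def using A eigen cvnorm_pos[OF \<open>v \<noteq> 0\<^sub>v (dim_vec v)\<close>]
    by (intro eigenvector_smult[of _ n]) auto
  with A have "cmod (cnormalize v \<bullet> cnormalize v) < (cvnorm (cnormalize v))\<^sup>2"
    using \<open>Im lam \<noteq> 0\<close> by (rule cmod_scalar_prod_self_less)
  then show ?thesis
    by (simp add: V1_def cvnorm_cnormalize[OF \<open>v \<noteq> 0\<^sub>v (dim_vec v)\<close>])
qed

lemma rvnorm_Theta1_squared:
  assumes "v \<noteq> 0\<^sub>v (dim_vec v)"
  shows "(rvnorm (Theta1 \<omega> v w t u))\<^sup>2
    = (1 + V1 v * cos (2 * (\<omega> * t + gamma1 w u) + Arg (cnormalize v \<bullet> cnormalize v))) / 2"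
proof -
  define c where "c = cnormalize v"
  define \<phi> where "\<phi> = \<omega> * t + gamma1 w u"
  have "(rvnorm (Theta1 \<omega> v w t u))\<^sup>2 = (\<Sum>k<dim_vec c. (cmod (c $ k) * cos (\<phi> + Arg (c $ k)))\<^sup>2)"
    by (simp add: rvnorm_squared Theta1_def c_def \<phi>_def cnormalize_def add_ac)
  also have "\<dots> = (\<Sum>k<dim_vec c. ((cmod (c $ k))\<^sup>2 + Re (cis (2 * \<phi>) * (c $ k)\<^sup>2)) / 2)"
    by (simp only: cmod_cos_add_Arg_squared)
  also have "\<dots> = ((cvnorm c)\<^sup>2 + Re (cis (2 * \<phi>) * (c \<bullet> c))) / 2"
    unfolding cvnorm_squared scalar_prod_self
    by (simp add: sum.distrib sum_distrib_left power2_eq_square flip: sum_divide_distrib)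
  also have "\<dots> = (1 + V1 v * cos (2 * \<phi> + Arg (c \<bullet> c))) / 2"
    using cvnorm_cnormalize[OF assms] unfolding Re_cis_mult by (simp add: V1_def c_def)
  finally show ?thesis
    by (simp add: c_def \<phi>_def)
qed

lemma OT_eq_sqrt_ratio:
  assumes "v \<noteq> 0\<^sub>v (dim_vec v)"
  defines "\<beta> \<equiv> Arg (cnormalize v \<bullet> cnormalize v)"
  shows "OT \<omega> v w t y0 z0
    = sqrt ((1 + V1 v * cos (2 * (\<omega> * t + gamma1 w z0) + \<beta>))
          / (1 + V1 v * cos (2 * (\<omega> * t + gamma1 w (rnormalize y0)) + \<beta>)))"
proof -
  have "OT \<omega> v w t y0 z0
      = sqrt ((rvnorm (Theta1 \<omega> v w t z0))\<^sup>2) / sqrt ((rvnorm (Theta1 \<omega> v w t (rnormalize y0)))\<^sup>2)"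
    by (simp add: OT_def rvnorm_def sum_nonneg)
  also have "\<dots> = sqrt (((1 + V1 v * cos (2 * (\<omega> * t + gamma1 w z0) + \<beta>)) / 2)
          / ((1 + V1 v * cos (2 * (\<omega> * t + gamma1 w (rnormalize y0)) + \<beta>)) / 2))"
    by (simp only: rvnorm_Theta1_squared[OF assms(1)] real_sqrt_divide \<beta>_def)
  also have "(x / 2) / (y / 2) = x / y" for x y :: real
    by simp
  finally show ?thesis .
qed

lemma one_plus_mult_ratio_bounds:
  fixes V a b :: real
  assumes "0 \<le> V" "V < 1" "\<bar>a\<bar> \<le> 1" "\<bar>b\<bar> \<le> 1"
  shows "(1 - V) / (1 + V) \<le> (1 + V * a) / (1 + V * b)"
    and "(1 + V * a) / (1 + V * b) \<le> (1 + V) / (1 - V)"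
proof -
  have "\<bar>V * a\<bar> \<le> V" "\<bar>V * b\<bar> \<le> V"
    using assms by (simp_all add: abs_mult mult_left_le)
  then show "(1 - V) / (1 + V) \<le> (1 + V * a) / (1 + V * b)"
    and "(1 + V * a) / (1 + V * b) \<le> (1 + V) / (1 - V)"
    using assms(2) by (auto intro!: frac_le simp: abs_le_iff)
qed

lemma V1_nonneg: "0 \<le> V1 v"
  by (simp add: V1_def)

lemma OT_bounds:
  assumes "v \<noteq> 0\<^sub>v (dim_vec v)" "V1 v < 1"
  shows "sqrt ((1 - V1 v) / (1 + V1 v)) \<le> OT \<omega> v w t y0 z0"
    and "OT \<omega> v w t y0 z0 \<le> sqrt ((1 + V1 v) / (1 - V1 v))"
  using one_plus_mult_ratio_bounds[OF V1_nonneg assms(2) abs_cos_le_one abs_cos_le_one]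
  by (simp_all add: OT_eq_sqrt_ratio[OF assms(1)])

lemma OT_attains_bounds:
  assumes "v \<noteq> 0\<^sub>v (dim_vec v)" "\<omega> \<noteq> 0"
    and odd: "gamma1 w z0 - gamma1 w (rnormalize y0) = (2 * of_int k + 1) * (pi / 2)"
  shows "\<exists>t. OT \<omega> v w t y0 z0 = sqrt ((1 - V1 v) / (1 + V1 v))"
    and "\<exists>t. OT \<omega> v w t y0 z0 = sqrt ((1 + V1 v) / (1 - V1 v))"
proof -
  define \<beta> where "\<beta> = Arg (cnormalize v \<bullet> cnormalize v)"
  define \<gamma> where "\<gamma> = gamma1 w (rnormalize y0)"
  have antiphase: "cos (2 * (\<omega> * t + gamma1 w z0) + \<beta>) = - cos (2 * (\<omega> * t + \<gamma>) + \<beta>)" for t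
  proof -
    have "2 * (\<omega> * t + gamma1 w z0) + \<beta> = (2 * (\<omega> * t + \<gamma>) + \<beta>) + (2 * of_int k + 1) * pi"
      using odd by (simp add: \<gamma>_def algebra_simps)
    then show ?thesis
      by (simp only: cos_add_odd_multiple_pi)
  qed
  have phase: "2 * (\<omega> * ((\<theta> - \<beta> - 2 * \<gamma>) / (2 * \<omega>)) + \<gamma>) + \<beta> = \<theta>" for \<theta>
    using \<open>\<omega> \<noteq> 0\<close> by (simp add: field_simps)
  have OT_t: "OT \<omega> v w t y0 z0
      = sqrt ((1 - V1 v * cos (2 * (\<omega> * t + \<gamma>) + \<beta>)) / (1 + V1 v * cos (2 * (\<omega> * t + \<gamma>) + \<beta>)))"
    for t
    using antiphase[of t] by (simp add: OT_eq_sqrt_ratio[OF assms(1)] \<beta>_def \<gamma>_def)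
  have OT_at: "OT \<omega> v w ((\<theta> - \<beta> - 2 * \<gamma>) / (2 * \<omega>)) y0 z0
      = sqrt ((1 - V1 v * cos \<theta>) / (1 + V1 v * cos \<theta>))" for \<theta>
    by (simp only: OT_t phase)
  show "\<exists>t. OT \<omega> v w t y0 z0 = sqrt ((1 - V1 v) / (1 + V1 v))"
    using OT_at[of 0] by auto
  show "\<exists>t. OT \<omega> v w t y0 z0 = sqrt ((1 + V1 v) / (1 - V1 v))"
    using OT_at[of pi] by auto
qed

theorem theorem9:
  fixes A :: "real mat" and n :: nat and lam1 :: complex
    and v w :: "complex vec" and y0 z0 :: "real vec"
  assumes A: "A \<in> carrier_mat n n"
    and ev: "eigenvalue (map_mat complex_of_real A) lam1"
    and im_pos: "Im lam1 > 0"
    and maxre: "\<forall>mu. eigenvalue (map_mat complex_of_real A) mu \<longrightarrow> Re mu \<le> Re lam1"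
    and only_pair: "\<forall>mu. eigenvalue (map_mat complex_of_real A) mu \<and> Re mu = Re lam1
                        \<longrightarrow> mu = lam1 \<or> mu = cnj lam1"
    and simple1: "order lam1 (char_poly (map_mat complex_of_real A)) = 1"
    and simple2: "order (cnj lam1) (char_poly (map_mat complex_of_real A)) = 1"
    and right_ev: "eigenvector (map_mat complex_of_real A) v lam1"
    and left_ev: "eigenvector (transpose_mat (map_mat complex_of_real A)) w lam1"
    and y0: "y0 \<in> carrier_vec n" and z0: "z0 \<in> carrier_vec n"
    and z0_unit: "rvnorm z0 = 1"
    and wy0: "w \<bullet> cvec y0 \<noteq> 0" and wz0: "w \<bullet> cvec z0 \<noteq> 0"
  shows "(\<forall>t::real.
            sqrt ((1 - V1 v) / (1 + V1 v)) \<le> OT (Im lam1) v w t y0 z0 \<and>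
            OT (Im lam1) v w t y0 z0 \<le> sqrt ((1 + V1 v) / (1 - V1 v)))
       \<and> ((\<exists>k::int. gamma1 w z0 - gamma1 w (rnormalize y0) = (2 * of_int k + 1) * (pi / 2)) \<longrightarrow>
            (\<exists>t1::real. OT (Im lam1) v w t1 y0 z0 = sqrt ((1 - V1 v) / (1 + V1 v))) \<and>
            (\<exists>t2::real. OT (Im lam1) v w t2 y0 z0 = sqrt ((1 + V1 v) / (1 - V1 v))))"
proof -
  have v: "v \<noteq> 0\<^sub>v (dim_vec v)"
    using right_ev by (rule eigenvector_nonzero)
  have "V1 v < 1"
    using A right_ev im_pos by (intro V1_less_1) auto
  with v show ?thesis
    using OT_bounds OT_attains_bounds[OF v, of "Im lam1"] im_pos by auto
qed

end
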